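(* Assume CH. There exists a set $A\subseteq\mathbb{R}^2$ which is a Hamel basis of $\mathbb{R}^2$ over $\mathbb{Q}$ and such that for every continuous injection $h:\mathbb{R}\to\mathbb{R}^2$ which is a homeomorphism onto its image, the set $h^{-1}(A\cap h(\mathbb{R}))$ is a strong Luzin subset of $\mathbb{R}$ (equivalently, $A\cap h(\mathbb{R})$ is a strong Luzin set in the space $h(\mathbb{R})$).
   Context: A Luzin set is a set $L\subseteq\mathbb{R}$ with $|L|=\mathfrak{c}$ such that $L\cap M$ is countable for every meager $M\subseteq\mathbb{R}$; it is a strong Luzin set if moreover $L\cap B$ is uncountable for every non-meager Borel set $B\subseteq\mathbb{R}$. A Hamel basis of $\mathbb{R}^2$ is a basis of $\mathbb{R}^2$ as a vector space over $\mathbb{Q}$. *)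

theory Defs
  imports "HOL-Analysis.Analysis" "HOL-Library.Equipollence"
begin

definition nowhere_dense :: "'a::topological_space set \<Rightarrow> bool" where
  "nowhere_dense S \<longleftrightarrow> interior (closure S) = {}"

definition meager :: "'a::topological_space set \<Rightarrow> bool" where
  "meager M \<longleftrightarrow> (\<exists>F :: nat \<Rightarrow> 'a set. (\<forall>n. nowhere_dense (F n)) \<and> M \<subseteq> (\<Union>n. F n))"

definition CH :: bool where
  "CH \<longleftrightarrow> (\<forall>S :: real set. uncountable S \<longrightarrow> S \<approx> (UNIV :: real set))"

definition luzin_set :: "real set \<Rightarrow> bool" where
  "luzin_set L \<longleftrightarrow> L \<approx> (UNIV :: real set) \<and> (\<forall>M. meager M \<longrightarrow> countable (L \<inter> M))"

definition strong_luzin_set :: "real set \<Rightarrow> bool" where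
  "strong_luzin_set L \<longleftrightarrow> luzin_set L \<and>
     (\<forall>B. B \<in> sets borel \<and> \<not> meager B \<longrightarrow> uncountable (L \<inter> B))"

definition qscale :: "rat \<Rightarrow> real \<times> real \<Rightarrow> real \<times> real" where
  "qscale q v = of_rat q *\<^sub>R v"

definition hamel_basis_R2 :: "(real \<times> real) set \<Rightarrow> bool" where
  "hamel_basis_R2 A \<longleftrightarrow> \<not> module.dependent qscale A \<and> module.span qscale A = UNIV"

end

theory Submission
  imports Defs
begin

text \<open>
  Under CH, well-order \<open>\<real>\<close> so that all initial segments are countable. Call a compact set of the plane
  thin if its preimage under every embedding of \<open>\<real>\<close> is nowhere dense; by the Baire category theorem,
  points on an embedded line can still be chosen in any open interval outside countably many thin sets
  and a countable set. Enumerate the thin sets and, each one uncountably often, all tasks \<open>(h, U, v)\<close>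
  with \<open>h\<close> an embedding, \<open>U\<close> a nonempty open set of reals and \<open>v\<close> a vector. Stage \<open>a\<close> adds finitely
  many vectors, rationally independent over everything added before and outside the thin sets listed
  up to \<open>a\<close>, which put \<open>v\<close> into the span and contain a point \<open>h t\<close> with \<open>t \<in> U\<close>. If \<open>M\<close> is meager, \<open>h ` M\<close> is covered by countably many thin sets, and a thin set meets
  only the countably many vectors added before it was listed; so \<open>h -` A\<close> is Luzin. A non-meager
  Borel set \<open>B\<close> differs from a nonempty open \<open>U\<close> by a meager set, and the uncountably many late stages
  serving \<open>(h, U, 0)\<close> place distinct points of \<open>h -` A\<close> in \<open>B\<close>.
\<close>

section \<open>Meager sets and the Baire property\<close>

lemma Baire_avoiding_point:
  fixes U :: "'a::{real_normed_vector,heine_borel} set"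
  assumes "open U" "U \<noteq> {}" "countable \<C>" "\<And>C. C \<in> \<C> \<Longrightarrow> closed C \<and> interior C = {}"
  shows "\<exists>t\<in>U. \<forall>C\<in>\<C>. t \<notin> C"
proof -
  have "UNIV \<subseteq> closure (\<Inter> (uminus ` \<C>))"
  proof (rule Baire)
    fix T assume "T \<in> uminus ` \<C>"
    then show "openin (top_of_set UNIV) T \<and> UNIV \<subseteq> closure T"
      using assms(4) by (auto simp: closure_complement open_Compl)
  qed (use assms(3) in auto)
  then have "U \<inter> \<Inter> (uminus ` \<C>) \<noteq> {}"
    using open_Int_closure_eq_empty[OF assms(1)] assms(2) by auto
  then show ?thesis by auto
qed

lemma meager_subset: "meager B \<Longrightarrow> A \<subseteq> B \<Longrightarrow> meager A"
  unfolding meager_def by blast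

lemma nowhere_dense_imp_meager: "nowhere_dense A \<Longrightarrow> meager A"
  unfolding meager_def by (rule exI[of _ "\<lambda>n. A"]) auto

lemma meager_empty [simp]: "meager {}"
  by (simp add: nowhere_dense_imp_meager nowhere_dense_def)

lemma meager_UN:
  fixes M :: "nat \<Rightarrow> 'a::topological_space set"
  assumes "\<And>n. meager (M n)"
  shows "meager (\<Union>n. M n)"
proof -
  obtain F :: "nat \<Rightarrow> nat \<Rightarrow> 'a set"
    where F: "\<And>n k. nowhere_dense (F n k)" "\<And>n. M n \<subseteq> (\<Union>k. F n k)"
    using assms unfolding meager_def by metis
  have "(\<Union>n. M n) \<subseteq> (\<Union>i. case_prod F (prod_decode i))"
  proof
    fix x assume "x \<in> (\<Union>n. M n)"
    then obtain n k where "x \<in> F n k" using F(2) by blast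
    then show "x \<in> (\<Union>i. case_prod F (prod_decode i))"
      by (intro UN_I[of "prod_encode (n, k)"]) auto
  qed
  then show ?thesis
    unfolding meager_def using F(1)
    by (intro exI[of _ "\<lambda>i. case_prod F (prod_decode i)"]) (auto simp: case_prod_beta)
qed

lemma meager_Un:
  assumes "meager A" "meager B"
  shows "meager (A \<union> B)"
proof -
  have "meager (\<Union>n. if n = (0::nat) then A else B)"
    by (rule meager_UN) (simp add: assms)
  moreover have "(\<Union>n. if n = (0::nat) then A else B) = A \<union> B"
    by (auto split: if_splits)
  ultimately show ?thesis by simp
qed

lemma open_not_meager:
  fixes U :: "'a::{real_normed_vector,heine_borel} set"
  assumes "open U" "U \<noteq> {}"
  shows "\<not> meager U"
proof
  assume "meager U"
  then obtain F :: "nat \<Rightarrow> 'a set" where F: "\<And>n. nowhere_dense (F n)" "U \<subseteq> (\<Union>n. F n)"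
    unfolding meager_def by blast
  have "closed (closure (F n)) \<and> interior (closure (F n)) = {}" for n
    using F(1) by (simp add: nowhere_dense_def)
  then obtain t where t: "t \<in> U" "\<forall>C\<in>range (\<lambda>n. closure (F n)). t \<notin> C"
    using Baire_avoiding_point[OF assms, of "range (\<lambda>n. closure (F n))"] by blast
  obtain n where "t \<in> F n"
    using F(2) t(1) by blast
  then show False
    using t(2) closure_subset[of "F n"] by blast
qed

definition baire_property :: "'a::topological_space set \<Rightarrow> bool" where
  "baire_property S \<longleftrightarrow> (\<exists>U. open U \<and> meager (U - S) \<and> meager (S - U))"

lemma baire_property_Compl:
  assumes "baire_property S"
  shows "baire_property (- S)"
proof -
  obtain U where U: "open U" "meager (U - S)" "meager (S - U)"
    using assms by (auto simp: baire_property_def)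
  let ?V = "interior (- U)"
  have "interior (- U - ?V) \<subseteq> ?V"
    by (rule interior_mono) blast
  then have "interior (- U - ?V) = {}"
    using interior_subset[of "- U - ?V"] by blast
  moreover have "closed (- U - ?V)"
    using U(1) by (intro closed_Diff) auto
  ultimately have "meager (- U - ?V)"
    by (intro nowhere_dense_imp_meager) (simp add: nowhere_dense_def closure_closed)
  then have "meager ((U - S) \<union> (- U - ?V))"
    using U(2) by (rule meager_Un[rotated])
  then have "meager (- S - ?V)"
    by (rule meager_subset) blast
  moreover have "meager (?V - - S)"
    using U(3) by (rule meager_subset) (use interior_subset in blast)
  ultimately show ?thesis
    unfolding baire_property_def using open_interior by blast
qed

lemma baire_property_UN:
  assumes "\<And>i::nat. baire_property (S i)"
  shows "baire_property (\<Union>i. S i)"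
proof -
  have "\<forall>i. \<exists>U. open U \<and> meager (U - S i) \<and> meager (S i - U)"
    using assms by (simp add: baire_property_def)
  then obtain U where U: "\<And>i. open (U i)" "\<And>i. meager (U i - S i)" "\<And>i. meager (S i - U i)"
    by metis
  have "meager ((\<Union>i. U i) - (\<Union>i. S i))"
    by (rule meager_subset[OF meager_UN[of "\<lambda>i. U i - S i", OF U(2)]]) blast
  moreover have "meager ((\<Union>i. S i) - (\<Union>i. U i))"
    by (rule meager_subset[OF meager_UN[of "\<lambda>i. S i - U i", OF U(3)]]) blast
  ultimately show ?thesis
    unfolding baire_property_def using U(1) by (intro exI[of _ "\<Union>i. U i"]) auto
qed

lemma borel_baire_property:
  assumes "B \<in> sets borel"
  shows "baire_property B"
proof -
  have "B \<in> sigma_sets UNIV {S. open S}"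
    using assms sets_borel by auto
  then show ?thesis
  proof (induction rule: sigma_sets.induct)
    case (Basic a)
    then show ?case unfolding baire_property_def by (intro exI[of _ a]) auto
  next
    case Empty
    then show ?case unfolding baire_property_def by (intro exI[of _ "{}"]) auto
  next
    case (Compl a)
    then show ?case using baire_property_Compl by (simp add: Compl_eq_Diff_UNIV[symmetric])
  next
    case (Union a)
    then show ?case using baire_property_UN by blast
  qed
qed

section \<open>Embedded lines and thin compact sets\<close>

definition embeddings :: "(real \<Rightarrow> real \<times> real) set" where
  "embeddings = {h. continuous_on UNIV h \<and> inj h \<and> (\<exists>g. homeomorphism UNIV (range h) h g)}"

definition thin :: "(real \<times> real) set \<Rightarrow> bool" where
  "thin K \<longleftrightarrow> compact K \<and> (\<forall>h\<in>embeddings. interior (h -` K) = {})"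

lemma horizontal_line_embedding:
  assumes "c \<noteq> 0"
  shows "(\<lambda>t. p + (c * t, 0)) \<in> embeddings"
proof -
  have "homeomorphism UNIV (range (\<lambda>t. p + (c * t, 0))) (\<lambda>t. p + (c * t, 0)) (\<lambda>q. (fst q - fst p) / c)"
    using assms unfolding homeomorphism_def
    by (auto intro!: continuous_intros simp: image_image)
  moreover have "inj (\<lambda>t. p + (c * t, 0))"
    using assms by (auto simp: inj_def)
  ultimately show ?thesis
    unfolding embeddings_def by (auto intro!: continuous_intros)
qed

lemma embeddings_nonempty: "embeddings \<noteq> {}"
  using horizontal_line_embedding[of 1] by force

lemma interior_continuous_image_interval:
  fixes f :: "real \<Rightarrow> real"
  assumes "continuous_on {a..b} f" "a \<le> b" "f a \<noteq> f b"
  shows "interior (f ` {a..b}) \<noteq> {}"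
proof -
  have conn: "connected (f ` {a..b})"
    using assms(1) by (rule connected_continuous_image) simp
  have "f a \<in> f ` {a..b}" "f b \<in> f ` {a..b}"
    using assms(2) by auto
  then have "{min (f a) (f b) .. max (f a) (f b)} \<subseteq> f ` {a..b}"
    by (intro connected_contains_Icc[OF conn]) (auto simp: min_def max_def)
  then have "{min (f a) (f b) <..< max (f a) (f b)} \<subseteq> interior (f ` {a..b})"
    by (intro interior_maximal) auto
  moreover have "{min (f a) (f b) <..< max (f a) (f b)} \<noteq> {}"
    using assms(3) by (simp add: min_def max_def)
  ultimately show ?thesis
    by blast
qed

lemma interior_vimage_embedding_image:
  assumes h: "h \<in> embeddings" and h0: "h0 \<in> embeddings" and C: "interior C = {}"
  shows "interior (h -` h0 ` C) = {}"
proof (rule ccontr)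
  obtain g0 where g0: "continuous_on (range h0) g0" "\<And>t. g0 (h0 t) = t"
    using h0 unfolding embeddings_def homeomorphism_def by auto
  assume "interior (h -` h0 ` C) \<noteq> {}"
  then obtain x e where e: "e > 0" "ball x e \<subseteq> h -` h0 ` C"
    by (meson all_not_in_conv mem_interior)
  define S where "S = {x - e/2 .. x + e/2}"
  have S: "S \<subseteq> h -` h0 ` C"
    using e unfolding S_def by (intro subset_trans[OF _ e(2)]) (auto simp: dist_real_def)
  have on_S: "g0 (h s) \<in> C \<and> h0 (g0 (h s)) = h s" if s: "s \<in> S" for s
  proof -
    obtain c where "c \<in> C" "h s = h0 c"
      using S s by blast
    then show ?thesis
      using g0(2) by simp
  qed
  have "continuous_on UNIV h"
    using h by (simp add: embeddings_def)
  moreover have "h ` S \<subseteq> range h0"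
    using S by auto
  ultimately have "continuous_on S (g0 \<circ> h)"
    by (intro continuous_on_compose continuous_on_subset[OF g0(1)]) (auto intro: continuous_on_subset)
  moreover have "h (x - e/2) \<noteq> h (x + e/2)"
    using h e(1) by (auto simp: embeddings_def dest: injD)
  then have "(g0 \<circ> h) (x - e/2) \<noteq> (g0 \<circ> h) (x + e/2)"
    using on_S[of "x - e/2"] on_S[of "x + e/2"] e(1) by (auto simp: S_def)
  ultimately have "interior ((g0 \<circ> h) ` S) \<noteq> {}"
    unfolding S_def using e(1) by (intro interior_continuous_image_interval) auto
  moreover have "(g0 \<circ> h) ` S \<subseteq> C"
    using on_S by auto
  ultimately show False
    using C interior_mono by blast
qed

lemma thin_embedding_image:
  assumes "h \<in> embeddings" "closed C" "interior C = {}"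
  shows "thin (h ` (C \<inter> {a..b}))"
  unfolding thin_def
proof (intro conjI ballI)
  show "compact (h ` (C \<inter> {a..b}))"
    using assms(1,2) unfolding embeddings_def
    by (intro compact_continuous_image) (auto intro: compact_Int_closed continuous_on_subset)
  show "interior (h' -` h ` (C \<inter> {a..b})) = {}" if "h' \<in> embeddings" for h'
    using interior_vimage_embedding_image[OF that assms(1)] assms(3) interior_mono[of "C \<inter> {a..b}" C]
    by blast
qed

lemma thin_empty [simp]: "thin {}"
  by (simp add: thin_def)

lemma closed_nowhere_dense_vimage_thin:
  assumes "thin K" "h \<in> embeddings"
  shows "closed (h -` K) \<and> interior (h -` K) = {}"
  using assms closed_vimage[of K h] compact_imp_closed by (auto simp: thin_def embeddings_def)

lemma countable_vimage_embedding:
  assumes "h \<in> embeddings" "countable S"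
  shows "countable (h -` S)"
proof -
  have "inj h"
    using assms(1) by (simp add: embeddings_def)
  then show ?thesis
    using countable_image_inj[OF assms(2)] by (simp add: vimage_def)
qed

lemma embeddings_avoid_countable_thin:
  assumes "open U" "U \<noteq> {}" "countable \<H>" "\<H> \<subseteq> embeddings"
    and "countable \<K>" "\<And>K. K \<in> \<K> \<Longrightarrow> thin K" "countable S"
  shows "\<exists>t\<in>U. \<forall>h\<in>\<H>. h t \<notin> \<Union>\<K> \<union> S"
proof -
  define \<C> where "\<C> = (\<Union>h\<in>\<H>. (\<lambda>K. h -` K) ` \<K> \<union> (\<lambda>s. {s}) ` (h -` S))"
  have "countable (h -` S)" if "h \<in> \<H>" for h
    using that assms(4,7) countable_vimage_embedding by blast
  then have "countable \<C>"
    unfolding \<C>_def using assms(3,5) by auto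
  moreover have "closed C \<and> interior C = {}" if "C \<in> \<C>" for C
    using that assms(4,6) closed_nowhere_dense_vimage_thin unfolding \<C>_def by auto
  ultimately have "\<exists>t\<in>U. \<forall>C\<in>\<C>. t \<notin> C"
    by (rule Baire_avoiding_point[OF assms(1,2)])
  then obtain t where t: "t \<in> U" "\<And>C. C \<in> \<C> \<Longrightarrow> t \<notin> C"
    by blast
  have "h t \<notin> K" if "h \<in> \<H>" "K \<in> \<K>" for h K
    using t(2)[of "h -` K"] that unfolding \<C>_def by blast
  moreover have "h t \<notin> S" if "h \<in> \<H>" for h
    using t(2)[of "{t}"] that unfolding \<C>_def by blast
  ultimately show ?thesis
    using t(1) by blast
qed

lemma meager_image_covered_by_thin:
  assumes h: "h \<in> embeddings" and M: "meager M"
  shows "\<exists>\<K>. countable \<K> \<and> (\<forall>K\<in>\<K>. thin K) \<and> h ` M \<subseteq> \<Union>\<K>"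
proof -
  obtain F :: "nat \<Rightarrow> real set" where F: "\<And>n. nowhere_dense (F n)" "M \<subseteq> (\<Union>n. F n)"
    using M unfolding meager_def by blast
  define K where "K n m = h ` (closure (F n) \<inter> {- real m .. real m})" for n m :: nat
  have "thin (K n m)" for n m
    unfolding K_def using F(1) by (intro thin_embedding_image h) (auto simp: nowhere_dense_def)
  moreover have "h ` M \<subseteq> \<Union>(range (case_prod K))"
  proof
    fix y assume "y \<in> h ` M"
    then obtain t where t: "t \<in> M" "y = h t"
      by blast
    obtain n where "t \<in> F n"
      using F(2) t(1) by blast
    moreover obtain m :: nat where "\<bar>t\<bar> \<le> real m"
      using real_arch_simple by blast
    ultimately have "t \<in> closure (F n) \<inter> {- real m .. real m}"
      using closure_subset by fastforce
    then have "y \<in> case_prod K (n, m)"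
      using t(2) by (simp add: K_def)
    then show "y \<in> \<Union>(range (case_prod K))"
      by blast
  qed
  ultimately show ?thesis
    by (intro exI[of _ "range (case_prod K)"]) auto
qed

section \<open>Independent extensions over the rationals\<close>

interpretation Q: vector_space qscale
  by unfold_locales (simp_all add: qscale_def of_rat_add of_rat_mult scaleR_add_right scaleR_add_left)

lemma countable_span:
  assumes "countable S"
  shows "countable (Q.span S)"
proof -
  have "countable (Q.span T)" if "finite T" for T
    using that
  proof (induction T rule: finite_induct)
    case (insert a T)
    have "Q.span (insert a T) = (\<lambda>(k, y). y + qscale k a) ` (UNIV \<times> Q.span T)"
    proof (intro set_eqI iffI)
      fix x assume "x \<in> Q.span (insert a T)"
      then obtain k where "x - qscale k a \<in> Q.span T"
        by (auto simp: Q.span_insert)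
      then show "x \<in> (\<lambda>(k, y). y + qscale k a) ` (UNIV \<times> Q.span T)"
        by (intro image_eqI[of _ _ "(k, x - qscale k a)"]) auto
    next
      fix x assume "x \<in> (\<lambda>(k, y). y + qscale k a) ` (UNIV \<times> Q.span T)"
      then obtain k y where "y \<in> Q.span T" "x = y + qscale k a"
        by auto
      then show "x \<in> Q.span (insert a T)"
        unfolding Q.span_insert by (intro CollectI exI[of _ k]) simp
    qed
    then show ?case
      using insert.IH by simp
  qed simp
  moreover have "Q.span S = (\<Union>T\<in>{T. finite T \<and> T \<subseteq> S}. Q.span T)"
    by (auto simp: Q.span_explicit intro: Q.span_mono[THEN subsetD])
  ultimately show ?thesis
    using countable_Collect_finite_subset[OF assms] by auto
qed

lemma independent_extension_spanning:
  assumes "countable A" "\<not> Q.dependent A" "countable \<K>" "\<And>K. K \<in> \<K> \<Longrightarrow> thin K"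
  obtains X where "finite X" "\<not> Q.dependent (A \<union> X)" "X \<inter> \<Union>\<K> = {}" "v \<in> Q.span (A \<union> X)"
proof (cases "v \<in> Q.span A")
  case True
  then show ?thesis
    using assms(2) that[of "{}"] by simp
next
  case False
  define S where "S = Q.span (insert v A)"
  have "countable S"
    unfolding S_def using assms(1) by (intro countable_span) simp
  moreover have "(\<lambda>t. v - (t, 0)) = (\<lambda>t. v + (- 1 * t, 0))"
    by (simp add: fun_eq_iff prod_eq_iff)
  then have "{\<lambda>t. (t, 0), \<lambda>t. v - (t, 0)} \<subseteq> embeddings"
    using horizontal_line_embedding[of 1 0] horizontal_line_embedding[of "- 1" v] by simp
  ultimately obtain t where "\<forall>h\<in>{\<lambda>t. (t, 0), \<lambda>t. v - (t, 0)}. h t \<notin> \<Union>\<K> \<union> S"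
    using embeddings_avoid_countable_thin[of UNIV "{\<lambda>t. (t, 0), \<lambda>t. v - (t, 0)}" \<K> S] assms(3,4)
    by auto
  \<comment> \<open>Write \<open>v = x + y\<close> with both summands avoiding the thin sets and \<open>x\<close> outside \<open>S\<close>.\<close>
  moreover define x y where "x = (t, 0)" and "y = v - x"
  ultimately have x: "x \<notin> \<Union>\<K> \<union> S" and y: "y \<notin> \<Union>\<K>"
    by auto
  have "x \<notin> Q.span A"
    using x Q.span_mono[of A "insert v A"] unfolding S_def by auto
  then have indep_x: "\<not> Q.dependent (insert x A)"
    using assms(2) by (rule Q.independent_insertI)
  have "y \<notin> Q.span (insert x A)"
  proof
    assume "y \<in> Q.span (insert x A)"
    then have "x + y \<in> Q.span (insert x A)"
      by (intro Q.span_add) (auto intro: Q.span_base)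
    then have "x \<in> S"
      unfolding S_def using Q.in_span_insert False by (simp add: y_def)
    then show False
      using x by simp
  qed
  then have "\<not> Q.dependent (insert y (insert x A))"
    using indep_x by (rule Q.independent_insertI)
  moreover have "v \<in> Q.span (insert y (insert x A))"
    using Q.span_add[of x _ y] by (simp add: y_def Q.span_base)
  moreover have "A \<union> {x, y} = insert y (insert x A)"
    by auto
  ultimately show ?thesis
    using x y that[of "{x, y}"] by auto
qed

lemma independent_extension_through_embedding:
  assumes "countable A" "\<not> Q.dependent A" "countable \<K>" "\<And>K. K \<in> \<K> \<Longrightarrow> thin K"
    and "h \<in> embeddings" "open U" "U \<noteq> {}"
  obtains P where "finite P" "\<not> Q.dependent (A \<union> P)" "P \<inter> \<Union>\<K> = {}" "v \<in> Q.span (A \<union> P)"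
    "\<exists>t\<in>U. h t \<in> P - A"
proof -
  obtain X where X: "finite X" "\<not> Q.dependent (A \<union> X)" "X \<inter> \<Union>\<K> = {}" "v \<in> Q.span (A \<union> X)"
    using independent_extension_spanning[OF assms(1-4)] by blast
  have "countable (Q.span (A \<union> X))"
    using assms(1) X(1) by (intro countable_span) (simp add: countable_finite)
  then obtain t where t: "t \<in> U" "h t \<notin> \<Union>\<K> \<union> Q.span (A \<union> X)"
    using embeddings_avoid_countable_thin[OF assms(6,7), of "{h}" \<K> "Q.span (A \<union> X)"] assms(3-5)
    by auto
  have "\<not> Q.dependent (insert (h t) (A \<union> X))"
    using t(2) X(2) by (intro Q.independent_insertI) auto
  moreover have "v \<in> Q.span (insert (h t) (A \<union> X))"
    using X(4) Q.span_mono[of "A \<union> X"] by blast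
  moreover have "h t \<notin> A"
    using t(2) Q.span_superset[of "A \<union> X"] by blast
  ultimately show ?thesis
    using X(1,3) t that[of "insert (h t) X"] by auto
qed

section \<open>Enumerations by reals\<close>

lemma open_sets_lepoll_nat_sets:
  "{U :: 'a::second_countable_topology set. open U} \<lesssim> (UNIV :: nat set set)"
proof -
  obtain \<B> :: "'a set set" where \<B>: "countable \<B>" "topological_basis \<B>"
    using ex_countable_basis by blast
  have union: "U = \<Union>{b\<in>\<B>. b \<subseteq> U}" if U: "open U" for U
  proof -
    obtain \<B>' where "\<B>' \<subseteq> \<B>" "\<Union>\<B>' = U"
      using \<B>(2) U unfolding topological_basis_def by blast
    then show ?thesis by blast
  qed
  have "inj_on (\<lambda>U. {b\<in>\<B>. b \<subseteq> U}) {U. open U}"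
  proof (rule inj_onI)
    fix U V assume UV: "U \<in> {U. open U}" "V \<in> {U. open U}" "{b\<in>\<B>. b \<subseteq> U} = {b\<in>\<B>. b \<subseteq> V}"
    have "U = \<Union>{b\<in>\<B>. b \<subseteq> U}"
      using UV(1) by (intro union) simp
    also have "\<dots> = \<Union>{b\<in>\<B>. b \<subseteq> V}"
      using UV(3) by simp
    also have "\<dots> = V"
      using UV(2) by (intro union[symmetric]) simp
    finally show "U = V" .
  qed
  moreover have "inj_on (image (to_nat_on \<B>)) ((\<lambda>U. {b\<in>\<B>. b \<subseteq> U}) ` {U. open U})"
    using inj_on_image_Pow[OF inj_on_to_nat_on[OF \<B>(1)]] by (rule inj_on_subset) auto
  ultimately have "inj_on (image (to_nat_on \<B>) \<circ> (\<lambda>U. {b\<in>\<B>. b \<subseteq> U})) {U. open U}"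
    by (rule comp_inj_on)
  then show ?thesis
    unfolding lepoll_def by blast
qed

lemma open_sets_lepoll_reals:
  "{U :: 'a::second_countable_topology set. open U} \<lesssim> (UNIV :: real set)"
  using open_sets_lepoll_nat_sets nat_sets_eqpoll_reals by (rule lepoll_trans2)

lemma closed_sets_lepoll_reals:
  "{C :: 'a::second_countable_topology set. closed C} \<lesssim> (UNIV :: real set)"
proof -
  have "C \<in> uminus ` {U. open U}" if "closed C" for C :: "'a set"
    using that by (intro image_eqI[of _ _ "- C"]) (auto simp: closed_def)
  then have "{C :: 'a set. closed C} \<subseteq> uminus ` {U. open U}"
    by blast
  then have "{C :: 'a set. closed C} \<lesssim> {U :: 'a set. open U}"
    by (rule subset_image_lepoll)
  then show ?thesis
    using open_sets_lepoll_reals by (rule lepoll_trans)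
qed

lemma reals_times_reals_eqpoll: "(UNIV :: real set) \<times> (UNIV :: real set) \<approx> (UNIV :: real set)"
  using card_of_Times_same_infinite[of "UNIV :: real set"] infinite_UNIV_char_0
  by (simp add: eqpoll_iff_card_of_ordIso)

lemma embeddings_lepoll_reals: "embeddings \<lesssim> (UNIV :: real set)"
proof -
  define graph where "graph h = {p. snd p = h (fst p)}" for h :: "real \<Rightarrow> real \<times> real"
  have "closed (graph h)" if "h \<in> embeddings" for h
  proof -
    have "continuous_on UNIV h"
      using that by (simp add: embeddings_def)
    then have "continuous_on UNIV (h \<circ> fst)"
      by (intro continuous_on_compose) (auto intro: continuous_on_subset continuous_intros)
    then show ?thesis
      unfolding graph_def by (intro closed_Collect_eq) (auto intro: continuous_intros simp: o_def)
  qed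
  moreover have "inj graph"
  proof (rule injI)
    fix h h' assume eq: "graph h = graph h'"
    have "(t, h t) \<in> graph h'" for t
      unfolding eq[symmetric] by (simp add: graph_def)
    then show "h = h'"
      by (simp add: graph_def fun_eq_iff)
  qed
  ultimately have "embeddings \<lesssim> {C :: (real \<times> (real \<times> real)) set. closed C}"
    unfolding lepoll_def by (intro exI[of _ graph]) (auto intro: inj_on_subset)
  then show ?thesis
    using closed_sets_lepoll_reals by (rule lepoll_trans)
qed

lemma lepoll_reals_imp_range:
  assumes "A \<lesssim> (UNIV :: real set)" "A \<noteq> {}"
  obtains e :: "real \<Rightarrow> 'a" where "range e = A"
proof -
  obtain g :: "real \<Rightarrow> 'a" where g: "A \<subseteq> range g"
    using assms(1) by (auto simp: lepoll_iff)
  obtain a where a: "a \<in> A"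
    using assms(2) by blast
  define e where "e x = (if g x \<in> A then g x else a)" for x
  have "range e = A"
  proof
    show "range e \<subseteq> A"
      using a by (auto simp: e_def)
    show "A \<subseteq> range e"
    proof
      fix y assume y: "y \<in> A"
      then obtain x where "y = g x"
        using g by blast
      then have "e x = y"
        using y by (simp add: e_def)
      then show "y \<in> range e"
        by (metis rangeI)
    qed
  qed
  then show ?thesis
    by (rule that)
qed

lemma uncountable_fibres:
  assumes "A \<lesssim> (UNIV :: real set)" "A \<noteq> {}"
  obtains f :: "real \<Rightarrow> 'a" where "range f = A" "\<And>x. x \<in> A \<Longrightarrow> uncountable (f -` {x})"
proof -
  have "A \<times> (UNIV :: real set) \<lesssim> (UNIV :: real set) \<times> (UNIV :: real set)"
    using assms(1) by (rule times_lepoll_mono) simp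
  then have "A \<times> (UNIV :: real set) \<lesssim> (UNIV :: real set)"
    using reals_times_reals_eqpoll by (rule lepoll_trans2)
  moreover have "A \<times> (UNIV :: real set) \<noteq> {}"
    using assms(2) by simp
  ultimately obtain e :: "real \<Rightarrow> 'a \<times> real" where e: "range e = A \<times> UNIV"
    by (rule lepoll_reals_imp_range)
  show ?thesis
  proof (rule that[of "fst \<circ> e"])
    show "range (fst \<circ> e) = A"
      unfolding image_comp[symmetric] e by simp
    fix x assume x: "x \<in> A"
    have "UNIV \<subseteq> snd ` e ` ((fst \<circ> e) -` {x})"
    proof
      fix y :: real
      obtain a where "e a = (x, y)"
        using e x by (metis SigmaI UNIV_I imageE)
      then show "y \<in> snd ` e ` ((fst \<circ> e) -` {x})"
        by (intro image_eqI[of _ _ "(x, y)"] image_eqI[of _ _ a]) auto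
    qed
    then show "uncountable ((fst \<circ> e) -` {x})"
      using uncountable_UNIV_real countable_subset by (metis countable_image)
  qed
qed

lemma CH_countable_initial_segments:
  assumes "CH"
  obtains r :: "real \<Rightarrow> real \<Rightarrow> bool"
  where "wf {(x, y). r x y}" "\<And>x y z. r x y \<Longrightarrow> r y z \<Longrightarrow> r x z"
    "\<And>x y. x \<noteq> y \<Longrightarrow> r x y \<or> r y x" "\<And>x. countable {y. r y x}"
proof
  \<comment> \<open>Proper initial segments of the cardinal well-order of \<open>\<real>\<close> are of smaller cardinality.\<close>
  let ?r = "card_of (UNIV :: real set)"
  define r where "r x y \<longleftrightarrow> (x, y) \<in> ?r \<and> x \<noteq> y" for x y
  have wo: "well_order_on UNIV ?r"
    using card_of_Well_order Field_card_of by metis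
  moreover have "{(x, y). r x y} = ?r - Id"
    by (auto simp: r_def)
  ultimately show "wf {(x, y). r x y}"
    by (simp add: well_order_on_def)
  show "r x z" if "r x y" "r y z" for x y z
    using wo that unfolding r_def well_order_on_def linear_order_on_def partial_order_on_def
      preorder_on_def by (metis antisymD transD)
  show "r x y \<or> r y x" if "x \<noteq> y" for x y
    using wo that unfolding r_def well_order_on_def linear_order_on_def total_on_def by blast
  show "countable {y. r y x}" for x
  proof (rule ccontr)
    assume "uncountable {y. r y x}"
    then have "ordIso2 (card_of {y. r y x}) ?r"
      using assms by (simp add: CH_def eqpoll_iff_card_of_ordIso)
    moreover have "{y. r y x} = underS ?r x"
      by (auto simp: r_def underS_def)
    moreover have "ordLess2 (card_of (underS ?r x)) ?r"
      by (rule card_of_underS[OF card_of_Card_order]) (simp add: Field_card_of)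
    ultimately show False
      using not_ordLess_ordIso by metis
  qed
qed

lemma thin_sets_enumeration:
  obtains K :: "real \<Rightarrow> (real \<times> real) set" where "range K = {C. thin C}"
proof -
  have "{C. thin C} \<lesssim> (UNIV :: real set)"
    using subset_imp_lepoll closed_sets_lepoll_reals by (rule lepoll_trans)
      (auto simp: thin_def compact_imp_closed)
  moreover have "{C. thin C} \<noteq> {}"
    using thin_empty by blast
  ultimately show ?thesis
    using that by (rule lepoll_reals_imp_range)
qed

lemma embeddings_open_vectors_lepoll_reals:
  "embeddings \<times> {U :: real set. open U \<and> U \<noteq> {}} \<times> (UNIV :: (real \<times> real) set) \<lesssim> (UNIV :: real set)"
proof -
  have R2: "(UNIV :: real set) \<times> (UNIV :: real set) \<lesssim> (UNIV :: real set)"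
    using reals_times_reals_eqpoll by (rule eqpoll_imp_lepoll)
  have "{U :: real set. open U \<and> U \<noteq> {}} \<lesssim> (UNIV :: real set)"
    using subset_imp_lepoll open_sets_lepoll_reals by (rule lepoll_trans) auto
  then have "{U :: real set. open U \<and> U \<noteq> {}} \<times> ((UNIV :: real set) \<times> (UNIV :: real set))
      \<lesssim> (UNIV :: real set) \<times> (UNIV :: real set)"
    using R2 by (rule times_lepoll_mono)
  then have "{U :: real set. open U \<and> U \<noteq> {}} \<times> ((UNIV :: real set) \<times> (UNIV :: real set))
      \<lesssim> (UNIV :: real set)"
    using R2 by (rule lepoll_trans)
  with embeddings_lepoll_reals
  have "embeddings \<times> {U :: real set. open U \<and> U \<noteq> {}} \<times> ((UNIV :: real set) \<times> (UNIV :: real set))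
      \<lesssim> (UNIV :: real set) \<times> (UNIV :: real set)"
    by (rule times_lepoll_mono)
  then show ?thesis
    using R2 unfolding UNIV_Times_UNIV by (rule lepoll_trans)
qed

section \<open>The transfinite construction\<close>

text \<open>Stage \<open>a\<close> serves the task \<open>(E a, W a, V a)\<close> while avoiding the thin sets \<open>K b\<close> with \<open>b \<unlhd> a\<close>.\<close>

locale hamel_luzin_construction =
  fixes prec :: "real \<Rightarrow> real \<Rightarrow> bool" (infix \<open>\<lhd>\<close> 50)
    and K :: "real \<Rightarrow> (real \<times> real) set"
    and E :: "real \<Rightarrow> real \<Rightarrow> real \<times> real"
    and W :: "real \<Rightarrow> real set"
    and V :: "real \<Rightarrow> real \<times> real"
  assumes wf_prec: "wf {(x, y). x \<lhd> y}"
    and prec_trans: "x \<lhd> y \<Longrightarrow> y \<lhd> z \<Longrightarrow> x \<lhd> z"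
    and prec_linear: "x \<noteq> y \<Longrightarrow> x \<lhd> y \<or> y \<lhd> x"
    and countable_initial_segment: "countable {y. y \<lhd> x}"
    and thin_K: "thin (K a)"
    and thin_in_range_K: "thin C \<Longrightarrow> C \<in> range K"
    and E_embedding: "E a \<in> embeddings"
    and open_W: "open (W a)"
    and W_nonempty: "W a \<noteq> {}"
    and uncountable_tasks:
      "h \<in> embeddings \<Longrightarrow> open U \<Longrightarrow> U \<noteq> {} \<Longrightarrow> uncountable {a. E a = h \<and> W a = U \<and> V a = v}"
begin

definition admissible :: "real \<Rightarrow> (real \<times> real) set \<Rightarrow> (real \<times> real) set \<Rightarrow> bool" where
  "admissible a A P \<longleftrightarrow> finite P \<and> \<not> Q.dependent (A \<union> P) \<and> P \<inter> \<Union>(K ` {b. b \<lhd> a \<or> b = a}) = {}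
     \<and> V a \<in> Q.span (A \<union> P) \<and> (\<exists>t\<in>W a. E a t \<in> P - A)"

definition stage :: "real \<Rightarrow> (real \<times> real) set" where
  "stage = wfrec {(x, y). x \<lhd> y} (\<lambda>f a. SOME P. admissible a (\<Union>b\<in>{b. b \<lhd> a}. f b) P)"

definition before :: "real \<Rightarrow> (real \<times> real) set" where
  "before a = (\<Union>b\<in>{b. b \<lhd> a}. stage b)"

definition basis :: "(real \<times> real) set" where
  "basis = (\<Union>a. stage a)"

lemma stage_eq: "stage a = (SOME P. admissible a (before a) P)"
proof -
  have "stage a = (SOME P. admissible a (\<Union>b\<in>{b. b \<lhd> a}. cut stage {(x, y). x \<lhd> y} a b) P)"
    unfolding stage_def by (subst wfrec[OF wf_prec]) simp
  also have "(\<Union>b\<in>{b. b \<lhd> a}. cut stage {(x, y). x \<lhd> y} a b) = before a"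
    unfolding before_def by (auto simp: cut_apply)
  finally show ?thesis .
qed

lemma before_stage_subset: "a \<lhd> b \<Longrightarrow> before a \<union> stage a \<subseteq> before b"
  unfolding before_def using prec_trans by blast

lemma independent_UN_stages:
  assumes "\<And>b. b \<in> I \<Longrightarrow> \<not> Q.dependent (before b \<union> stage b)"
  shows "\<not> Q.dependent (\<Union>b\<in>I. before b \<union> stage b)"
proof (rule Q.independent_Union_directed)
  fix C D assume "C \<in> (\<lambda>b. before b \<union> stage b) ` I" "D \<in> (\<lambda>b. before b \<union> stage b) ` I"
  then obtain b b' where "C = before b \<union> stage b" "D = before b' \<union> stage b'"
    by blast
  then show "C \<subseteq> D \<or> D \<subseteq> C"
    using prec_linear[of b b'] before_stage_subset[of b b'] before_stage_subset[of b' b] by auto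
qed (use assms in auto)

lemma admissible_stage: "admissible a (before a) (stage a)"
  using wf_prec
proof (induction a rule: wf_induct_rule)
  case (less a)
  then have IH: "\<And>b. b \<lhd> a \<Longrightarrow> admissible b (before b) (stage b)"
    by blast
  have "countable (before a)"
    unfolding before_def using countable_initial_segment IH
    by (auto simp: admissible_def intro: countable_finite)
  moreover have "before a = (\<Union>b\<in>{b. b \<lhd> a}. before b \<union> stage b)"
  proof
    show "before a \<subseteq> (\<Union>b\<in>{b. b \<lhd> a}. before b \<union> stage b)"
      unfolding before_def[of a] by blast
    show "(\<Union>b\<in>{b. b \<lhd> a}. before b \<union> stage b) \<subseteq> before a"
      using before_stage_subset by blast
  qed
  then have "\<not> Q.dependent (before a)"
    using independent_UN_stages[of "{b. b \<lhd> a}"] IH by (simp add: admissible_def)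
  moreover have "countable (K ` {b. b \<lhd> a \<or> b = a})"
    using countable_initial_segment[of a] by (simp add: Collect_disj_eq)
  ultimately obtain P where "finite P" "\<not> Q.dependent (before a \<union> P)"
    "P \<inter> \<Union>(K ` {b. b \<lhd> a \<or> b = a}) = {}" "V a \<in> Q.span (before a \<union> P)"
    "\<exists>t\<in>W a. E a t \<in> P - before a"
    by (rule independent_extension_through_embedding[OF _ _ _ _ E_embedding open_W W_nonempty])
      (auto intro: thin_K)
  then have "admissible a (before a) P"
    by (simp add: admissible_def)
  then show ?case
    unfolding stage_eq by (rule someI)
qed

lemma countable_before: "countable (before a)"
  unfolding before_def using countable_initial_segment admissible_stage
  by (auto simp: admissible_def intro: countable_finite)

lemma hamel_basis: "hamel_basis_R2 basis"
proof -
  have "basis = (\<Union>b. before b \<union> stage b)"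
    by (auto simp: basis_def before_def)
  then have "\<not> Q.dependent basis"
    using independent_UN_stages[of UNIV] admissible_stage by (simp add: admissible_def)
  moreover have "v \<in> Q.span basis" for v
  proof -
    obtain a where "V a = v"
      using uncountable_tasks[OF E_embedding[of 0] open_W[of 0] W_nonempty[of 0], of v] by fastforce
    then have "v \<in> Q.span (before a \<union> stage a)"
      using admissible_stage[of a] by (simp add: admissible_def)
    moreover have "before a \<union> stage a \<subseteq> basis"
      by (auto simp: basis_def before_def)
    ultimately show ?thesis
      using Q.span_mono by blast
  qed
  ultimately show ?thesis
    unfolding hamel_basis_R2_def by auto
qed

lemma stage_avoids_later_thin: "p \<in> stage a \<Longrightarrow> p \<in> K d \<Longrightarrow> a \<lhd> d"
  using admissible_stage[of a] prec_linear[of a d] by (auto simp: admissible_def)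

lemma basis_Int_K_subset: "basis \<inter> K d \<subseteq> before d"
proof
  fix p assume "p \<in> basis \<inter> K d"
  then obtain a where "p \<in> stage a" "p \<in> K d"
    by (auto simp: basis_def)
  moreover from this have "a \<lhd> d"
    by (rule stage_avoids_later_thin)
  ultimately show "p \<in> before d"
    by (auto simp: before_def)
qed

lemma meager_image_covered_by_stages:
  assumes "h \<in> embeddings" "meager M"
  obtains D where "countable D" "h ` M \<subseteq> \<Union>(K ` D)"
proof -
  obtain \<K> where \<K>: "countable \<K>" "\<And>C. C \<in> \<K> \<Longrightarrow> thin C" "h ` M \<subseteq> \<Union>\<K>"
    using meager_image_covered_by_thin[OF assms] by blast
  have "\<K> \<subseteq> K ` inv K ` \<K>"
  proof
    fix C assume C: "C \<in> \<K>"
    have "C = K (inv K C)"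
      using thin_in_range_K[OF \<K>(2)[OF C]] by (rule f_inv_into_f[symmetric])
    then show "C \<in> K ` inv K ` \<K>"
      using C by (rule image_eqI[OF _ imageI])
  qed
  then have "\<Union>\<K> \<subseteq> \<Union>(K ` inv K ` \<K>)"
    by (rule Union_mono)
  with \<K>(3) have "h ` M \<subseteq> \<Union>(K ` inv K ` \<K>)"
    by (rule subset_trans)
  with countable_image[OF \<K>(1)] show ?thesis
    by (rule that)
qed

lemma countable_vimage_basis_Int_meager:
  assumes "h \<in> embeddings" "meager M"
  shows "countable (h -` basis \<inter> M)"
proof -
  obtain D where D: "countable D" "h ` M \<subseteq> \<Union>(K ` D)"
    using meager_image_covered_by_stages[OF assms] by blast
  have "countable (\<Union>d\<in>D. before d)"
    using D(1) countable_before by blast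
  then have "countable (h -` (\<Union>d\<in>D. before d))"
    by (rule countable_vimage_embedding[OF assms(1)])
  moreover have "h -` basis \<inter> M \<subseteq> h -` (\<Union>d\<in>D. before d)"
    using D(2) basis_Int_K_subset by blast
  ultimately show ?thesis
    by (rule countable_subset[rotated])
qed

lemma countable_has_upper_bound:
  assumes "countable S"
  obtains g where "\<And>b. b \<in> S \<Longrightarrow> b \<lhd> g"
proof -
  have "countable (S \<union> (\<Union>b\<in>S. {y. y \<lhd> b}))"
    using assms countable_initial_segment by blast
  then have "S \<union> (\<Union>b\<in>S. {y. y \<lhd> b}) \<noteq> UNIV"
    using uncountable_UNIV_real by metis
  then obtain g where g: "g \<notin> S \<union> (\<Union>b\<in>S. {y. y \<lhd> b})"
    by blast
  have "b \<lhd> g" if b: "b \<in> S" for b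
    using g b prec_linear[of b g] by auto
  then show ?thesis
    by (rule that)
qed

definition witness :: "real \<Rightarrow> real" where
  "witness a = (SOME t. t \<in> W a \<and> E a t \<in> stage a - before a)"

lemma witness: "witness a \<in> W a" "E a (witness a) \<in> stage a - before a"
proof -
  have "\<exists>t. t \<in> W a \<and> E a t \<in> stage a - before a"
    using admissible_stage[of a] by (auto simp: admissible_def)
  then have "witness a \<in> W a \<and> E a (witness a) \<in> stage a - before a"
    unfolding witness_def by (rule someI_ex)
  then show "witness a \<in> W a" "E a (witness a) \<in> stage a - before a"
    by auto
qed

lemma inj_on_witness: "inj_on witness {a. E a = h}"
proof -
  have no_collision: False if ab: "a \<lhd> b" and eq: "E a = E b" "witness a = witness b" for a b
  proof -
    have "E a (witness a) \<in> before b"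
      using witness(2)[of a] before_stage_subset[OF ab] by blast
    then have "E b (witness b) \<in> before b"
      using eq by simp
    then show False
      using witness(2)[of b] by blast
  qed
  show ?thesis
  proof (rule inj_onI)
    fix a b assume "a \<in> {a. E a = h}" "b \<in> {a. E a = h}" "witness a = witness b"
    then show "a = b"
      using prec_linear[of a b] no_collision[of a b] no_collision[of b a] by force
  qed
qed

lemma late_witness_mem:
  assumes cover: "h ` (U - B) \<subseteq> \<Union>(K ` D)" and g: "\<And>d. d \<in> D \<Longrightarrow> d \<lhd> g"
    and a: "E a = h" "W a = U" "\<not> a \<lhd> g"
  shows "witness a \<in> h -` basis \<inter> B"
proof -
  have stage: "h (witness a) \<in> stage a"
    using witness(2)[of a] a(1) by simp
  moreover have "witness a \<in> B"
  proof (rule ccontr)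
    assume "witness a \<notin> B"
    then have "h (witness a) \<in> h ` (U - B)"
      using witness(1)[of a] a(2) by blast
    then obtain d where d: "d \<in> D" "h (witness a) \<in> K d"
      using cover by blast
    have "a \<lhd> d"
      using stage d(2) by (rule stage_avoids_later_thin)
    then have "a \<lhd> g"
      using prec_trans g[OF d(1)] by blast
    then show False
      using a(3) by simp
  qed
  ultimately show ?thesis
    by (auto simp: basis_def)
qed

lemma uncountable_vimage_basis_Int_borel:
  assumes h: "h \<in> embeddings" and B: "B \<in> sets borel" "\<not> meager B"
  shows "uncountable (h -` basis \<inter> B)"
proof -
  obtain U where U: "open U" "meager (U - B)" "meager (B - U)"
    using borel_baire_property[OF B(1)] by (auto simp: baire_property_def)
  have "U \<noteq> {}"
    using U(3) B(2) by force
  obtain D where D: "countable D" "h ` (U - B) \<subseteq> \<Union>(K ` D)"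
    using meager_image_covered_by_stages[OF h U(2)] by blast
  obtain g where g: "\<And>d. d \<in> D \<Longrightarrow> d \<lhd> g"
    using D(1) by (rule countable_has_upper_bound) blast
  define \<Sigma> where "\<Sigma> = {a. E a = h \<and> W a = U \<and> V a = 0} - {a. a \<lhd> g}"
  have "uncountable \<Sigma>"
  proof
    assume "countable \<Sigma>"
    then have "countable (\<Sigma> \<union> {a. a \<lhd> g})"
      using countable_initial_segment[of g] by (rule countable_Un)
    moreover have "{a. E a = h \<and> W a = U \<and> V a = 0} \<subseteq> \<Sigma> \<union> {a. a \<lhd> g}"
      by (auto simp: \<Sigma>_def)
    ultimately have "countable {a. E a = h \<and> W a = U \<and> V a = 0}"
      by (rule countable_subset[rotated])
    then show False
      using uncountable_tasks[OF h U(1) \<open>U \<noteq> {}\<close>] by blast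
  qed
  moreover have "inj_on witness \<Sigma>"
    by (rule inj_on_subset[OF inj_on_witness[of h]]) (auto simp: \<Sigma>_def)
  ultimately have "uncountable (witness ` \<Sigma>)"
    using countable_image_inj_on by blast
  moreover have "witness ` \<Sigma> \<subseteq> h -` basis \<inter> B"
    using late_witness_mem[OF D(2) g] by (auto simp: \<Sigma>_def)
  ultimately show ?thesis
    using countable_subset by blast
qed

lemma strong_luzin_set_vimage_basis:
  assumes "CH" "h \<in> embeddings"
  shows "strong_luzin_set (h -` (basis \<inter> range h))"
proof -
  have "\<not> meager (UNIV :: real set)"
    by (rule open_not_meager) auto
  then have "uncountable (h -` basis \<inter> UNIV)"
    by (intro uncountable_vimage_basis_Int_borel[OF assms(2)]) auto
  then have "h -` basis \<approx> (UNIV :: real set)"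
    using assms(1) by (simp add: CH_def)
  moreover have "\<forall>M. meager M \<longrightarrow> countable (h -` basis \<inter> M)"
    using countable_vimage_basis_Int_meager[OF assms(2)] by blast
  moreover have "\<forall>B. B \<in> sets borel \<and> \<not> meager B \<longrightarrow> uncountable (h -` basis \<inter> B)"
    using uncountable_vimage_basis_Int_borel[OF assms(2)] by blast
  moreover have "h -` (basis \<inter> range h) = h -` basis"
    by blast
  ultimately show ?thesis
    unfolding strong_luzin_set_def luzin_set_def by simp
qed

end

theorem mainTheorem8:
  assumes "CH"
  shows "\<exists>A :: (real \<times> real) set. hamel_basis_R2 A \<and>
           (\<forall>h :: real \<Rightarrow> real \<times> real.
              continuous_on UNIV h \<and> inj h \<and> (\<exists>g. homeomorphism UNIV (range h) h g) \<longrightarrow>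
              strong_luzin_set (h -` (A \<inter> range h)))"
proof -
  obtain prec :: "real \<Rightarrow> real \<Rightarrow> bool" where prec: "wf {(x, y). prec x y}"
    "\<And>x y z. prec x y \<Longrightarrow> prec y z \<Longrightarrow> prec x z" "\<And>x y. x \<noteq> y \<Longrightarrow> prec x y \<or> prec y x"
    "\<And>x. countable {y. prec y x}"
    using CH_countable_initial_segments[OF assms] by blast
  obtain K :: "real \<Rightarrow> (real \<times> real) set" where K: "range K = {C. thin C}"
    by (rule thin_sets_enumeration)
  obtain f :: "real \<Rightarrow> (real \<Rightarrow> real \<times> real) \<times> real set \<times> (real \<times> real)"
    where f: "range f = embeddings \<times> {U. open U \<and> U \<noteq> {}} \<times> UNIV"
      "\<And>x. x \<in> embeddings \<times> {U. open U \<and> U \<noteq> {}} \<times> UNIV \<Longrightarrow> uncountable (f -` {x})"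
    using uncountable_fibres[OF embeddings_open_vectors_lepoll_reals] embeddings_nonempty by blast
  have f_range: "f a \<in> embeddings \<times> {U. open U \<and> U \<noteq> {}} \<times> UNIV" for a
    using f(1) by blast
  interpret hamel_luzin_construction prec K "fst \<circ> f" "fst \<circ> snd \<circ> f" "snd \<circ> snd \<circ> f"
  proof
    have "{a. (fst \<circ> f) a = h \<and> (fst \<circ> snd \<circ> f) a = U \<and> (snd \<circ> snd \<circ> f) a = v} = f -` {(h, U, v)}"
      for h U v by (auto simp: prod_eq_iff)
    then show "uncountable {a. (fst \<circ> f) a = h \<and> (fst \<circ> snd \<circ> f) a = U \<and> (snd \<circ> snd \<circ> f) a = v}"
      if "h \<in> embeddings" "open U" "U \<noteq> {}" for h U v
      using that f(2) by simp
  qed (use prec K f_range in \<open>auto simp: mem_Times_iff\<close>)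
  show ?thesis
    using hamel_basis strong_luzin_set_vimage_basis[OF assms] by (auto simp: embeddings_def)
qed

end
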